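(* Let $d\ge2$, let $\mathcal{S}$ be a simple-minded system of $A_n^{dn}$-$\underline{\mathrm{mod}}$ with associated permutation $\sigma$, let $i\in\underline{n}$, and let $s_i$ be the size of the $\sigma$-orbit of $i$. For $0\le j\le s_i-1$ let $M_{ij}\in\mathcal{S}$ be the object with top $S_{\sigma^j(i)}$ and socle $S_{\sigma^{j+1}(i)}$, and write $M_{ij}=M^{\sigma^j(i)}_{\sigma^{j+1}(i),l_{ij}}$ with $l_{ij}\ge0$. Then there is at most one $j\in\{0,\dots,s_i-1\}$ with $l_{ij}=0$.
   Context: $A_n^{dn}=kQ/I$ ($k$ algebraically closed), $Q$ the cyclic quiver with vertices $1,\dots,n$ and arrows $i\to i+1$, $n\to1$, $I$ generated by all paths of length $dn+1$. $M^a_{b,t}$ is the indecomposable (uniserial) module with top $S_a$, socle $S_b$, and $S_a$ occurring $t+1$ times as composition factor. $\underline{\mathrm{Hom}}$ is Hom modulo maps factoring through projectives. A simple-minded system (sms) is a family $\mathcal{S}$ of indecomposable non-projective modules with $\underline{\mathrm{Hom}}(S,T)=0$ for distinct $S,T\in\mathcal{S}$, $\underline{\mathrm{Hom}}(S,S)\cong k$, and such that each indecomposable non-projective $X$ has $\underline{\mathrm{Hom}}(X,S)\neq0$ for some $S\in\mathcal{S}$. For an sms each simple is the top of exactly one and the socle of exactly one object; the associated permutation $\sigma$ of $\underline{n}=\{1,\dots,n\}$ is $\sigma(a)=b$ if some object has top $S_a$ and socle $S_b$. *)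

theory Defs
  imports "HOL-Computational_Algebra.Polynomial"
begin

text \<open>Concrete model of the self-injective Nakayama algebra A_n^{dn} = kQ/I,
  Q the cyclic quiver on vertices 1..n with arrows i -> i+1, n -> 1, I generated
  by all paths of length dn+1.

  A uniserial module is given by a pair (a, L): top S_a, Loewy length L,
  with basis e_0, ..., e_{L-1}, where e_m lies at vertex vtx n a m and the arrow
  starting at vtx n a m sends e_m to e_{m+1} (and e_{L-1} to 0).
  Valid modules: a in 1..n, 1 <= L <= dn+1; projective ones have L = dn+1.\<close>

definition vtx :: "nat \<Rightarrow> nat \<Rightarrow> nat \<Rightarrow> nat" where
  "vtx n a m = (a - 1 + m) mod n + 1"

text \<open>A module homomorphism (a,L) -> (b,K) written as a matrix F p m = coefficient
  of e'_p in f(e_m); conditions: entries outside the index ranges vanish, f respects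
  the vertex idempotents, and f commutes with the action of the arrows.\<close>

definition is_hom :: "nat \<Rightarrow> nat \<times> nat \<Rightarrow> nat \<times> nat \<Rightarrow> (nat \<Rightarrow> nat \<Rightarrow> 'k::field) \<Rightarrow> bool" where
  "is_hom n X Y F \<longleftrightarrow>
     (\<forall>p m. (snd Y \<le> p \<or> snd X \<le> m) \<longrightarrow> F p m = 0) \<and>
     (\<forall>p<snd Y. \<forall>m<snd X. vtx n (fst Y) p \<noteq> vtx n (fst X) m \<longrightarrow> F p m = 0) \<and>
     (\<forall>p<snd Y. \<forall>m<snd X.
        (if 0 < p then F (p - 1) m else 0) = (if m + 1 < snd X then F p (m + 1) else 0))"

definition proj_mod :: "nat \<Rightarrow> nat \<Rightarrow> nat \<Rightarrow> nat \<times> nat" where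
  "proj_mod n d c = (c, d * n + 1)"

text \<open>f : X -> Y factors through a projective module, i.e. through a finite direct
  sum of indecomposable projectives P_{c_1} + ... + P_{c_r}; equivalently f is a sum
  of composites X -> P_{c_k} -> Y.\<close>
definition factors_proj :: "nat \<Rightarrow> nat \<Rightarrow> nat \<times> nat \<Rightarrow> nat \<times> nat \<Rightarrow> (nat \<Rightarrow> nat \<Rightarrow> 'k::field) \<Rightarrow> bool" where
  "factors_proj n d X Y F \<longleftrightarrow>
     (\<exists>cs :: nat list. \<exists>G H :: nat \<Rightarrow> nat \<Rightarrow> nat \<Rightarrow> 'k.
        (\<forall>k<length cs. cs ! k \<in> {1..n} \<and>
            is_hom n X (proj_mod n d (cs ! k)) (G k) \<and>
            is_hom n (proj_mod n d (cs ! k)) Y (H k)) \<and>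
        F = (\<lambda>p m. \<Sum>k<length cs. \<Sum>q<d * n + 1. H k p q * G k q m))"

definition stable_hom_zero :: "'k::field itself \<Rightarrow> nat \<Rightarrow> nat \<Rightarrow> nat \<times> nat \<Rightarrow> nat \<times> nat \<Rightarrow> bool" where
  "stable_hom_zero _ n d X Y \<longleftrightarrow>
     (\<forall>F :: nat \<Rightarrow> nat \<Rightarrow> 'k. is_hom n X Y F \<longrightarrow> factors_proj n d X Y F)"

definition stable_end_is_k :: "'k::field itself \<Rightarrow> nat \<Rightarrow> nat \<Rightarrow> nat \<times> nat \<Rightarrow> bool" where
  "stable_end_is_k _ n d X \<longleftrightarrow>
     (\<exists>F :: nat \<Rightarrow> nat \<Rightarrow> 'k. is_hom n X X F \<and> \<not> factors_proj n d X X F \<and>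
        (\<forall>G. is_hom n X X G \<longrightarrow>
           (\<exists>c. factors_proj n d X X (\<lambda>p m. G p m - c * F p m))))"

text \<open>The module M^a_{b,t}: top S_a, socle S_b, S_a occurring t+1 times.
  It is encoded as a triple (a, b, t); its Loewy length is t*n + ((b - a) mod n) + 1.\<close>
definition mod_of :: "nat \<Rightarrow> nat \<times> nat \<times> nat \<Rightarrow> nat \<times> nat" where
  "mod_of n M = (case M of (a, b, t) \<Rightarrow> (a, t * n + (b + n - a) mod n + 1))"

definition indec_nonproj :: "nat \<Rightarrow> nat \<Rightarrow> nat \<times> nat \<times> nat \<Rightarrow> bool" where
  "indec_nonproj n d M \<longleftrightarrow>
     (case M of (a, b, t) \<Rightarrow> a \<in> {1..n} \<and> b \<in> {1..n} \<and> snd (mod_of n M) \<le> d * n)"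

definition is_sms :: "'k::field itself \<Rightarrow> nat \<Rightarrow> nat \<Rightarrow> (nat \<times> nat \<times> nat) set \<Rightarrow> bool" where
  "is_sms K n d S \<longleftrightarrow>
     (\<forall>M\<in>S. indec_nonproj n d M) \<and>
     (\<forall>M\<in>S. \<forall>N\<in>S. M \<noteq> N \<longrightarrow> stable_hom_zero K n d (mod_of n M) (mod_of n N)) \<and>
     (\<forall>M\<in>S. stable_end_is_k K n d (mod_of n M)) \<and>
     (\<forall>X. indec_nonproj n d X \<longrightarrow>
        (\<exists>M\<in>S. \<not> stable_hom_zero K n d (mod_of n X) (mod_of n M)))"

definition sms_perm :: "(nat \<times> nat \<times> nat) set \<Rightarrow> nat \<Rightarrow> nat" where
  "sms_perm S a = (THE b. \<exists>t. (a, b, t) \<in> S)"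

definition orbit_size :: "(nat \<Rightarrow> nat) \<Rightarrow> nat \<Rightarrow> nat" where
  "orbit_size f i = (LEAST s. 0 < s \<and> (f ^^ s) i = i)"

end

theory Submission
  imports Defs "HOL-Combinatorics.Orbits"
begin

text \<open>A homomorphism X \<rightarrow> Y between uniserial modules is determined by the image of the top
  generator of X, and it factors through a projective iff it lifts to the projective cover of Y,
  i.e. iff that image lies deep enough in Y. So if the top of X lies on the composition series
  of Y and the socle of Y on that of X, the map of X onto the overlap is stably nonzero as soon
  as the lengths are small, and two such objects of an sms must coincide. Applied to the objects
  with tops c and x, this shows that the complement of the arc from c to \<sigma> c is \<sigma>-invariant;
  since \<sigma> is a permutation, the whole \<sigma>-orbit of c lies on that arc. Two objects with l = 0 on
  one orbit therefore overlap in this way within a single turn of the quiver, and d \<ge> 2 makes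
  the overlap criterion applicable.\<close>

section \<open>Paths in the cyclic quiver\<close>

definition cyc_dist :: "nat \<Rightarrow> nat \<Rightarrow> nat \<Rightarrow> nat" where
  "cyc_dist n a b = (b + n - a) mod n"

lemma cyc_dist_eq:
  assumes "a \<in> {1..n}" "b \<in> {1..n}"
  shows "cyc_dist n a b = (if a \<le> b then b - a else b + n - a)"
proof (cases "a \<le> b")
  case True
  then have "cyc_dist n a b = ((b - a) + n) mod n" unfolding cyc_dist_def by (simp add: add.commute)
  also have "\<dots> = b - a" using assms by auto
  finally show ?thesis using True by simp
qed (use assms in \<open>simp add: cyc_dist_def\<close>)

lemma cyc_dist_add_cases:
  assumes "a \<in> {1..n}" "b \<in> {1..n}" "c \<in> {1..n}"
  shows "cyc_dist n a b + cyc_dist n b c = cyc_dist n a c \<or>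
         cyc_dist n a b + cyc_dist n b c = cyc_dist n a c + n"
  using assms unfolding cyc_dist_eq[OF assms(1,2)] cyc_dist_eq[OF assms(2,3)] cyc_dist_eq[OF assms(1,3)]
  by auto

lemma cyc_dist_lt: "a \<in> {1..n} \<Longrightarrow> b \<in> {1..n} \<Longrightarrow> cyc_dist n a b < n"
  by (auto simp: cyc_dist_eq)

lemma cyc_dist_eq_0_iff: "a \<in> {1..n} \<Longrightarrow> b \<in> {1..n} \<Longrightarrow> cyc_dist n a b = 0 \<longleftrightarrow> a = b"
  by (auto simp: cyc_dist_eq)

lemma cyc_dist_self [simp]: "cyc_dist n a a = 0"
  by (simp add: cyc_dist_def)

lemma cyc_dist_on_arc_cases:
  "a \<in> {1..n} \<Longrightarrow> a' \<in> {1..n} \<Longrightarrow> b \<in> {1..n} \<Longrightarrow>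
    cyc_dist n a' a \<le> cyc_dist n a' b \<or> cyc_dist n a a' \<le> cyc_dist n a b"
  by (auto simp: cyc_dist_eq)

lemma vtx_add: "vtx n a (k + m) = vtx n (vtx n a k) m"
  by (simp add: vtx_def mod_add_left_eq add.assoc)

lemma vtx_mult_add: "vtx n a (t * n + m) = vtx n a m"
  by (simp add: vtx_def add.left_commute)

lemma vtx_0: "a \<in> {1..n} \<Longrightarrow> vtx n a 0 = a"
  by (auto simp: vtx_def)

lemma vtx_cyc_dist:
  assumes "a \<in> {1..n}" "b \<in> {1..n}"
  shows "vtx n a (cyc_dist n a b) = b"
proof -
  have "(a - 1 + cyc_dist n a b) mod n = (b - 1) mod n"
  proof (cases "a \<le> b")
    case False
    then have "a - 1 + cyc_dist n a b = (b - 1) + n" using assms by (auto simp: cyc_dist_eq)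
    then show ?thesis by (simp only: mod_add_self2)
  qed (use assms in \<open>auto simp: cyc_dist_eq\<close>)
  then show ?thesis using assms by (auto simp: vtx_def)
qed

section \<open>Homomorphisms between uniserial modules\<close>

lemma is_hom_zero_outside: "is_hom n X Y F \<Longrightarrow> snd Y \<le> p \<or> snd X \<le> m \<Longrightarrow> F p m = 0"
  unfolding is_hom_def by blast

lemma is_hom_zero_vtx_mismatch:
  "is_hom n X Y F \<Longrightarrow> p < snd Y \<Longrightarrow> m < snd X \<Longrightarrow> vtx n (fst Y) p \<noteq> vtx n (fst X) m \<Longrightarrow> F p m = 0"
  unfolding is_hom_def by blast

lemma is_hom_arrow_commute:
  "is_hom n X Y F \<Longrightarrow> p < snd Y \<Longrightarrow> m < snd X \<Longrightarrow>
    (if 0 < p then F (p - 1) m else 0) = (if m + 1 < snd X then F p (m + 1) else 0)"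
  unfolding is_hom_def by blast

text \<open>The matrix of the map between uniserial modules of Loewy lengths L and M sending the
  generator e_0 to the vector with coordinates g.\<close>
definition toeplitz :: "nat \<Rightarrow> nat \<Rightarrow> (nat \<Rightarrow> 'k::zero) \<Rightarrow> nat \<Rightarrow> nat \<Rightarrow> 'k" where
  "toeplitz L M g p m = (if m \<le> p \<and> m < L \<and> p < M then g (p - m) else 0)"

lemma is_hom_eq_toeplitz:
  assumes hom: "is_hom n X Y F"
  shows "F p m = toeplitz (snd X) (snd Y) (\<lambda>q. F q 0) p m"
proof (induction m arbitrary: p)
  case 0
  then show ?case using is_hom_zero_outside[OF hom, of p 0] by (auto simp: toeplitz_def)
next
  case (Suc m)
  show ?case
  proof (cases "Suc m < snd X \<and> p < snd Y")
    case True
    then have "F p (Suc m) = (if 0 < p then F (p - 1) m else 0)"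
      using is_hom_arrow_commute[OF hom, of p m] by simp
    then show ?thesis using Suc[of "p - 1"] True by (auto simp: toeplitz_def)
  qed (use is_hom_zero_outside[OF hom, of p "Suc m"] in \<open>auto simp: toeplitz_def\<close>)
qed

lemma toeplitz_is_hom:
  assumes vertex: "\<And>q. q < M \<Longrightarrow> g q \<noteq> 0 \<Longrightarrow> vtx n b q = vtx n a 0"
    and socle: "\<And>q. q + L < M \<Longrightarrow> g q = 0"
  shows "is_hom n (a, L) (b, M) (toeplitz L M g)"
  unfolding is_hom_def
proof (intro conjI allI impI)
  fix p m assume "p < snd (b, M)" "m < snd (a, L)" and mismatch: "vtx n (fst (b, M)) p \<noteq> vtx n (fst (a, L)) m"
  show "toeplitz L M g p m = 0"
  proof (rule ccontr)
    assume "toeplitz L M g p m \<noteq> 0"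
    then have "m \<le> p" "p < M" "g (p - m) \<noteq> 0" by (auto simp: toeplitz_def split: if_splits)
    then have "vtx n b (p - m) = vtx n a 0" using vertex[of "p - m"] by linarith
    then have "vtx n b (p - m + m) = vtx n a (0 + m)" by (simp only: vtx_add)
    with mismatch \<open>m \<le> p\<close> show False by simp
  qed
next
  fix p m assume p: "p < snd (b, M)" and m: "m < snd (a, L)"
  show "(if 0 < p then toeplitz L M g (p - 1) m else 0) =
      (if m + 1 < snd (a, L) then toeplitz L M g p (m + 1) else 0)"
  proof (cases "m + 1 < L")
    case True
    then show ?thesis using p by (cases "m + 1 \<le> p") (auto simp: toeplitz_def)
  next
    case False
    have "g (p - 1 - m) = 0" if "0 < p" "m \<le> p - 1"
      using socle[of "p - 1 - m"] False m p that by simp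
    then show ?thesis using False by (simp add: toeplitz_def)
  qed
qed (auto simp: toeplitz_def)

lemma is_hom_top_image_vanishes:
  assumes hom: "is_hom n X Y F" and q: "q + snd X < snd Y"
  shows "F q 0 = 0"
proof (cases "snd X = 0")
  case False
  have "F (q + snd X - 1) (snd X - 1) = toeplitz (snd X) (snd Y) (\<lambda>q. F q 0) (q + snd X - 1) (snd X - 1)"
    by (rule is_hom_eq_toeplitz[OF hom])
  also have "\<dots> = F q 0"
  proof -
    have "snd X - 1 \<le> q + snd X - 1" "q + snd X - 1 < snd Y" "q + snd X - 1 - (snd X - 1) = q"
      using False q by linarith+
    then show ?thesis using False by (simp add: toeplitz_def)
  qed
  finally have "F (q + snd X - 1) (snd X - 1) = F q 0" .
  moreover have "F (q + snd X - 1) (snd X - 1) = 0"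
    using is_hom_arrow_commute[OF hom, of "q + snd X" "snd X - 1"] False q by simp
  ultimately show ?thesis by simp
qed (use is_hom_zero_outside[OF hom] in simp)

lemma factors_proj_top_image_zero:
  assumes fac: "factors_proj n d X Y F" and p: "p + snd X \<le> d * n"
  shows "F p 0 = 0"
proof -
  obtain cs G H where homs: "\<And>k. k < length cs \<Longrightarrow>
        is_hom n X (proj_mod n d (cs ! k)) (G k) \<and> is_hom n (proj_mod n d (cs ! k)) Y (H k)"
    and F: "F = (\<lambda>p m. \<Sum>k<length cs. \<Sum>q<d * n + 1. H k p q * G k q m)"
    using fac unfolding factors_proj_def by blast
  have "H k p q * G k q 0 = 0" if k: "k < length cs" for k q
  proof (cases "p < q")
    case True
    have "is_hom n (proj_mod n d (cs ! k)) Y (H k)" using homs[OF k] by blast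
    then have "H k p q = 0" using is_hom_eq_toeplitz[of n _ Y "H k" p q] True by (simp add: toeplitz_def)
    then show ?thesis by simp
  next
    case False
    have "is_hom n X (proj_mod n d (cs ! k)) (G k)" using homs[OF k] by blast
    then have "G k q 0 = 0" using is_hom_top_image_vanishes False p by (fastforce simp: proj_mod_def)
    then show ?thesis by simp
  qed
  then show ?thesis unfolding F by (simp add: sum.neutral)
qed

lemma factors_projI:
  assumes hom: "is_hom n (a, L) (b, M) F" and b: "b \<in> {1..n}" and M: "M \<le> d * n"
    and top_image: "\<And>p. p + L \<le> d * n \<Longrightarrow> F p 0 = 0"
  shows "factors_proj n d (a, L) (b, M) F"
proof -
  define G where "G = toeplitz L (d * n + 1) (\<lambda>q. F q 0)"
  define H :: "nat \<Rightarrow> nat \<Rightarrow> 'a" where "H = toeplitz (d * n + 1) M (\<lambda>q. if q = 0 then 1 else 0)"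
  have G: "is_hom n (a, L) (proj_mod n d b) G"
    unfolding G_def proj_mod_def
  proof (rule toeplitz_is_hom)
    fix q assume "F q 0 \<noteq> 0"
    then show "vtx n b q = vtx n a 0"
      using is_hom_zero_outside[OF hom, of q 0] is_hom_zero_vtx_mismatch[OF hom, of q 0] by fastforce
  qed (use top_image in simp)
  have H: "is_hom n (proj_mod n d b) (b, M) H"
    unfolding H_def proj_mod_def by (rule toeplitz_is_hom) (use M in \<open>auto split: if_splits\<close>)
  have "F p m = (\<Sum>q<d * n + 1. H p q * G q m)" for p m
  proof -
    have "(\<Sum>q<d * n + 1. H p q * G q m) = (\<Sum>q<d * n + 1. if q = p then (if p < M then G p m else 0) else 0)"
      by (rule sum.cong) (auto simp: H_def toeplitz_def)
    also have "\<dots> = (if p < M then G p m else 0)"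
      using M by (subst sum.delta) auto
    also have "\<dots> = toeplitz L M (\<lambda>q. F q 0) p m"
      using M by (auto simp: G_def toeplitz_def)
    also have "\<dots> = F p m"
      by (rule is_hom_eq_toeplitz[OF hom, symmetric, simplified])
    finally show ?thesis by simp
  qed
  then show ?thesis
    unfolding factors_proj_def using b G H
    by (intro exI[of _ "[b]"] exI[of _ "\<lambda>_. G"] exI[of _ "\<lambda>_. H"]) auto
qed

lemma not_stable_hom_zeroI:
  fixes K :: "'k::field itself"
  assumes r: "1 \<le> r" "r \<le> L" "r \<le> M" and long: "L + M \<le> d * n + r"
    and vertex: "vtx n b (M - r) = vtx n a 0"
  shows "\<not> stable_hom_zero K n d (a, L) (b, M)"
proof -
  define F :: "nat \<Rightarrow> nat \<Rightarrow> 'k" where "F = toeplitz L M (\<lambda>q. if q = M - r then 1 else 0)"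
  have "is_hom n (a, L) (b, M) F"
    unfolding F_def by (rule toeplitz_is_hom) (use vertex r in \<open>auto split: if_splits\<close>)
  moreover have "\<not> factors_proj n d (a, L) (b, M) F"
  proof
    assume "factors_proj n d (a, L) (b, M) F"
    then have "F (M - r) 0 = 0" using factors_proj_top_image_zero long r by fastforce
    then show False using r by (simp add: F_def toeplitz_def)
  qed
  ultimately show ?thesis unfolding stable_hom_zero_def by blast
qed

lemma stable_hom_zero_full_length:
  fixes K :: "'k::field itself"
  assumes tops: "a \<noteq> b" "a \<in> {1..n}" "b \<in> {1..n}" and M: "M \<le> d * n"
  shows "stable_hom_zero K n d (a, d * n) (b, M)"
  unfolding stable_hom_zero_def
proof (intro allI impI)
  fix F :: "nat \<Rightarrow> nat \<Rightarrow> 'k" assume hom: "is_hom n (a, d * n) (b, M) F"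
  show "factors_proj n d (a, d * n) (b, M) F"
  proof (rule factors_projI[OF hom])
    fix p assume "p + d * n \<le> d * n"
    then show "F p 0 = 0"
      using is_hom_zero_outside[OF hom, of 0 0] is_hom_zero_vtx_mismatch[OF hom, of 0 0] tops
      by (auto simp: vtx_0)
  qed (use tops M in auto)
qed

section \<open>Periodic points of iterated maps\<close>

lemma funpow_mem_invariant: "(\<And>y. y \<in> A \<Longrightarrow> f y \<in> A) \<Longrightarrow> x \<in> A \<Longrightarrow> (f ^^ m) x \<in> A"
  by (induction m) auto

lemma inj_on_self_map_periodic:
  assumes A: "finite A" "inj_on f A" "f ` A \<subseteq> A" and x: "x \<in> A"
  shows "\<exists>s>0. (f ^^ s) x = x"
proof -
  define g where "g y = (if y \<in> A then f y else y)" for y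
  have "bij_betw f A A" using A endo_inj_surj by (simp add: bij_betw_def)
  then have "bij_betw g A A" using bij_betw_cong[of A f g] by (simp add: g_def)
  then have perm: "g permutes A" by (rule bij_imp_permutes) (simp add: g_def)
  then have "x \<in> orbit g x"
    using A(1) by (intro permutation_self_in_orbit) (auto simp: permutation_permutes)
  then obtain s where "0 < s" "(g ^^ s) x = x" by (auto simp: orbit_altdef)
  moreover have "(g ^^ m) x = (f ^^ m) x" for m
  proof (induction m)
    case (Suc m)
    have "(f ^^ m) x \<in> A" using Suc.IH permutes_in_funpow_image[OF perm x, of m] by simp
    then have "g ((f ^^ m) x) = f ((f ^^ m) x)" by (simp add: g_def)
    then show ?case using Suc.IH by simp
  qed simp
  ultimately show ?thesis by auto
qed

lemma periodic_funpow_reach: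
  assumes period: "(f ^^ s) x = x" "0 < s"
  shows "(f ^^ (s * j - j + k)) ((f ^^ j) x) = (f ^^ k) x"
proof -
  have "j \<le> s * j" using period(2) by simp
  then have steps: "s * j - j + k + j = k + s * j" by linarith
  have "(f ^^ (s * j - j + k)) ((f ^^ j) x) = (f ^^ (s * j - j + k + j)) x"
    by (simp only: funpow_add comp_apply)
  also have "\<dots> = (f ^^ ((k + s * j) mod s)) x"
    unfolding steps by (rule funpow_mod_eq[OF period(1), symmetric])
  also have "\<dots> = (f ^^ k) x" using funpow_mod_eq[OF period(1), of k] by simp
  finally show ?thesis .
qed

lemma periodic_point_in_invariant_set:
  assumes period: "(f ^^ s) x = x" "0 < s" and invariant: "\<And>y. y \<in> P \<Longrightarrow> f y \<in> P"
    and "(f ^^ m) x \<in> P"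
  shows "x \<in> P"
  using funpow_mem_invariant[of P f, OF invariant assms(4), of "s * m - m + 0"]
  unfolding periodic_funpow_reach[OF period] by simp

lemma inj_on_funpow_orbit_size:
  assumes "(f ^^ s) x = x" "0 < s"
  shows "inj_on (\<lambda>j. (f ^^ j) x) {..<orbit_size f x}"
proof (rule linorder_inj_onI')
  fix j1 j2 assume j2: "j2 \<in> {..<orbit_size f x}" and "j1 < j2"
  have period: "0 < orbit_size f x" "(f ^^ orbit_size f x) x = x"
    using LeastI[of "\<lambda>s. 0 < s \<and> (f ^^ s) x = x"] assms unfolding orbit_size_def by blast+
  show "(f ^^ j1) x \<noteq> (f ^^ j2) x"
  proof
    assume eq: "(f ^^ j1) x = (f ^^ j2) x"
    have "(f ^^ (orbit_size f x - j2 + j1)) x = (f ^^ (orbit_size f x - j2)) ((f ^^ j1) x)"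
      by (simp only: funpow_add comp_apply)
    also have "\<dots> = (f ^^ (orbit_size f x - j2 + j2)) x"
      unfolding eq by (simp only: funpow_add comp_apply)
    also have "\<dots> = x" using period j2 by simp
    finally have "orbit_size f x \<le> orbit_size f x - j2 + j1"
      using j2 unfolding orbit_size_def by (intro Least_le) simp
    with \<open>j1 < j2\<close> j2 show False by simp
  qed
qed

section \<open>Simple-minded systems\<close>

lemma mod_of_eq [simp]: "mod_of n (a, b, t) = (a, t * n + cyc_dist n a b + 1)"
  by (simp add: mod_of_def cyc_dist_def)

lemma sms_memD:
  assumes "is_sms K n d S" "(a, b, t) \<in> S"
  shows "a \<in> {1..n}" "b \<in> {1..n}" "t * n + cyc_dist n a b < d * n" "t < d"
proof -
  show "a \<in> {1..n}" and "b \<in> {1..n}" and "t * n + cyc_dist n a b < d * n"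
    using assms unfolding is_sms_def indec_nonproj_def by fastforce+
  then have "t * n < d * n" by linarith
  then show "t < d" by simp
qed

lemma sms_eq_if_not_stable_hom_zero:
  "is_sms K n d S \<Longrightarrow> M \<in> S \<Longrightarrow> N \<in> S \<Longrightarrow> \<not> stable_hom_zero K n d (mod_of n M) (mod_of n N) \<Longrightarrow> M = N"
  unfolding is_sms_def by blast

lemma max_mult_add_less: "(t::nat) < d \<Longrightarrow> t' < d \<Longrightarrow> e < n \<Longrightarrow> max t t' * n + e < d * n"
proof -
  assume "t < d" "t' < d" "e < n"
  moreover have "Suc (max t t') * n \<le> d * n" using \<open>t < d\<close> \<open>t' < d\<close> by (intro mult_le_mono1) simp
  ultimately show ?thesis by simp
qed

text \<open>If the top of X lies on the path of Y and the socle of Y lies on the path of X, then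
  X maps onto the overlap, a submodule of Y; the length bound keeps this map from factoring
  through the projective cover of Y.\<close>
lemma sms_eq_if_overlap:
  fixes K :: "'k::field itself"
  assumes S: "is_sms K n d S" and X: "(a, b, t) \<in> S" and Y: "(a', b', t') \<in> S"
    and top: "cyc_dist n a' a \<le> cyc_dist n a' b'"
    and socle: "cyc_dist n a b' \<le> cyc_dist n a b"
    and short: "max t t' * n + cyc_dist n a' a + cyc_dist n a b < d * n"
  shows "(a, b, t) = (a', b', t')"
proof -
  note memX = sms_memD[OF S X] and memY = sms_memD[OF S Y]
  have arc: "cyc_dist n a' b' = cyc_dist n a' a + cyc_dist n a b'"
    using cyc_dist_add_cases[of a' n a b'] cyc_dist_lt[of a n b'] memX memY top by auto
  define r where "r = min t t' * n + cyc_dist n a b' + 1"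
  have min_max: "min t t' * n + max t t' * n = t * n + t' * n" "min t t' * n \<le> t * n" "min t t' * n \<le> t' * n"
    by (cases "t \<le> t'"; simp)+
  have "t' * n + cyc_dist n a' b' + 1 - r = (t' - min t t') * n + cyc_dist n a' a"
    using min_max unfolding r_def arc diff_mult_distrib by linarith
  then have vertex: "vtx n a' (t' * n + cyc_dist n a' b' + 1 - r) = vtx n a 0"
    using memX memY by (simp add: vtx_mult_add vtx_cyc_dist vtx_0)
  have "\<not> stable_hom_zero K n d (mod_of n (a, b, t)) (mod_of n (a', b', t'))"
    unfolding mod_of_eq
    by (rule not_stable_hom_zeroI[OF _ _ _ _ vertex]) (use min_max socle short arc in \<open>unfold r_def, linarith+\<close>)
  then show ?thesis using sms_eq_if_not_stable_hom_zero[OF S X Y] by blast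
qed

lemma sms_top_unique:
  fixes K :: "'k::field itself"
  assumes S: "is_sms K n d S" and "(a, b, t) \<in> S" "(a, b', t') \<in> S"
  shows "b = b'"
proof -
  have "(a, b, t) = (a, b', t')"
    if le: "cyc_dist n a b' \<le> cyc_dist n a b" and X: "(a, b, t) \<in> S" and Y: "(a, b', t') \<in> S"
    for b t b' t'
  proof (rule sms_eq_if_overlap[OF S X Y _ le])
    show "max t t' * n + cyc_dist n a a + cyc_dist n a b < d * n"
      using max_mult_add_less cyc_dist_lt sms_memD[OF S X] sms_memD[OF S Y] by simp
  qed simp
  then show ?thesis using assms nat_le_linear by blast
qed

lemma sms_socle_unique:
  fixes K :: "'k::field itself"
  assumes S: "is_sms K n d S" and "(a, b, t) \<in> S" "(a', b, t') \<in> S"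
  shows "a = a'"
proof -
  have "(a, b, t) = (a', b, t')"
    if le: "cyc_dist n a' a \<le> cyc_dist n a' b" and X: "(a, b, t) \<in> S" and Y: "(a', b, t') \<in> S"
    for a t a' t'
  proof (rule sms_eq_if_overlap[OF S X Y le])
    note memX = sms_memD[OF S X] and memY = sms_memD[OF S Y]
    have "cyc_dist n a' a + cyc_dist n a b < n"
      using cyc_dist_add_cases[of a' n a b] cyc_dist_lt[of a n b] cyc_dist_lt[of a' n b] memX memY le
      by auto
    then show "max t t' * n + cyc_dist n a' a + cyc_dist n a b < d * n"
      using max_mult_add_less memX memY by (simp add: add.assoc)
  qed simp
  then show ?thesis using assms cyc_dist_on_arc_cases sms_memD[OF S] by (metis prod.inject)
qed

lemma sms_top_exists:
  fixes K :: "'k::field itself"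
  assumes S: "is_sms K n d S" and d: "1 \<le> d" and c: "c \<in> {1..n}"
  shows "\<exists>b t. (c, b, t) \<in> S"
proof -
  define b where "b = (if c = 1 then n else c - 1)"
  have b: "b \<in> {1..n}" using c by (auto simp: b_def)
  then have dist: "cyc_dist n c b = n - 1" using c by (auto simp: b_def cyc_dist_eq)
  have len: "(d - 1) * n + cyc_dist n c b + 1 = d * n"
    using dist c d by (simp add: diff_mult_distrib)
  have "indec_nonproj n d (c, b, d - 1)"
    unfolding indec_nonproj_def using b c len by simp
  then obtain M where M: "M \<in> S" and nonzero: "\<not> stable_hom_zero K n d (c, d * n) (mod_of n M)"
    using S len unfolding is_sms_def by (metis mod_of_eq)
  obtain a b' t where abt: "M = (a, b', t)" by (cases M) blast
  note memM = sms_memD[OF S M[unfolded abt]]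
  have "a = c"
  proof (rule ccontr)
    assume "a \<noteq> c"
    then have "stable_hom_zero K n d (c, d * n) (mod_of n M)"
      unfolding abt mod_of_eq using memM c by (intro stable_hom_zero_full_length) auto
    with nonzero show False by blast
  qed
  then show ?thesis using M abt by blast
qed

lemma sms_perm_eq:
  fixes K :: "'k::field itself"
  assumes S: "is_sms K n d S" and X: "(a, b, t) \<in> S"
  shows "sms_perm S a = b"
  unfolding sms_perm_def
proof (rule the_equality)
  fix b' assume "\<exists>t'. (a, b', t') \<in> S"
  then show "b' = b" using sms_top_unique[OF S X] by blast
qed (use X in blast)

lemma sms_perm_mem:
  fixes K :: "'k::field itself"
  assumes S: "is_sms K n d S" and d: "1 \<le> d" and c: "c \<in> {1..n}"
  shows "\<exists>t. (c, sms_perm S c, t) \<in> S"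
proof -
  obtain b t where "(c, b, t) \<in> S" using sms_top_exists[OF S d c] by blast
  then show ?thesis using sms_perm_eq[OF S] by auto
qed

lemma sms_perm_in:
  fixes K :: "'k::field itself"
  assumes S: "is_sms K n d S" and d: "1 \<le> d" and c: "c \<in> {1..n}"
  shows "sms_perm S c \<in> {1..n}"
proof -
  obtain t where "(c, sms_perm S c, t) \<in> S" using sms_perm_mem[OF S d c] by blast
  then show ?thesis by (rule sms_memD(2)[OF S])
qed

lemma sms_perm_inj_on:
  fixes K :: "'k::field itself"
  assumes S: "is_sms K n d S" and d: "1 \<le> d"
  shows "inj_on (sms_perm S) {1..n}"
proof (rule inj_onI)
  fix a a' assume "a \<in> {1..n}" "a' \<in> {1..n}" and eq: "sms_perm S a = sms_perm S a'"
  then obtain t t' where "(a, sms_perm S a, t) \<in> S" "(a', sms_perm S a, t') \<in> S"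
    using sms_perm_mem[OF S d] eq by metis
  then show "a = a'" by (rule sms_socle_unique[OF S])
qed

lemma sms_perm_periodic:
  fixes K :: "'k::field itself"
  assumes S: "is_sms K n d S" and d: "1 \<le> d" and c: "c \<in> {1..n}"
  shows "\<exists>s>0. (sms_perm S ^^ s) c = c"
proof (rule inj_on_self_map_periodic[OF _ sms_perm_inj_on[OF S d] _ c])
  show "sms_perm S ` {1..n} \<subseteq> {1..n}" using sms_perm_in[OF S d] by blast
qed simp

lemma sms_perm_preserves_outside_arc:
  fixes K :: "'k::field itself"
  assumes S: "is_sms K n d S" and d: "1 \<le> d" and c: "c \<in> {1..n}" and x: "x \<in> {1..n}"
    and outside: "cyc_dist n c (sms_perm S c) < cyc_dist n c x"
  shows "cyc_dist n c (sms_perm S c) < cyc_dist n c (sms_perm S x)"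
proof (rule ccontr)
  let ?\<sigma> = "sms_perm S"
  assume "\<not> ?thesis"
  then have inside: "cyc_dist n c (?\<sigma> x) \<le> cyc_dist n c (?\<sigma> c)" by simp
  obtain t u where X: "(c, ?\<sigma> c, t) \<in> S" and Y: "(x, ?\<sigma> x, u) \<in> S"
    using sms_perm_mem[OF S d] c x by blast
  note memX = sms_memD[OF S X] and memY = sms_memD[OF S Y]
  have "x \<noteq> c" using outside by auto
  then have around: "cyc_dist n x c + cyc_dist n c x = n"
    using cyc_dist_add_cases[OF x c x] cyc_dist_eq_0_iff[OF c x] by auto
  have "(c, ?\<sigma> c, t) = (x, ?\<sigma> x, u)"
  proof (rule sms_eq_if_overlap[OF S X Y _ inside])
    show "cyc_dist n x c \<le> cyc_dist n x (?\<sigma> x)"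
      using cyc_dist_add_cases[OF x c memY(2)] cyc_dist_lt[OF x memY(2)] around inside outside
      by linarith
    show "max t u * n + cyc_dist n x c + cyc_dist n c (?\<sigma> c) < d * n"
      using max_mult_add_less[OF memX(4) memY(4), of "cyc_dist n x c + cyc_dist n c (?\<sigma> c)"]
        around outside by (simp add: add.assoc)
  qed
  with \<open>x \<noteq> c\<close> show False by simp
qed

lemma sms_perm_orbit_within_arc:
  fixes K :: "'k::field itself"
  assumes S: "is_sms K n d S" and d: "1 \<le> d" and c: "c \<in> {1..n}"
  shows "cyc_dist n c ((sms_perm S ^^ m) c) \<le> cyc_dist n c (sms_perm S c)"
proof (rule ccontr)
  let ?\<sigma> = "sms_perm S"
  define P where "P = {x \<in> {1..n}. cyc_dist n c (?\<sigma> c) < cyc_dist n c x}"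
  have invariant: "?\<sigma> y \<in> P" if "y \<in> P" for y
    using that sms_perm_in[OF S d] sms_perm_preserves_outside_arc[OF S d c] unfolding P_def by blast
  assume "\<not> ?thesis"
  moreover have "(?\<sigma> ^^ m) c \<in> {1..n}" using funpow_mem_invariant sms_perm_in[OF S d] c by metis
  ultimately have "(?\<sigma> ^^ m) c \<in> P" unfolding P_def by simp
  moreover obtain s where "0 < s" "(?\<sigma> ^^ s) c = c" using sms_perm_periodic[OF S d c] by blast
  ultimately have "c \<in> P" using periodic_point_in_invariant_set invariant by metis
  then show False unfolding P_def by simp
qed

lemma sms_l0_objects_in_orbit_eq:
  fixes K :: "'k::field itself"
  assumes S: "is_sms K n d S" and d: "2 \<le> d" and a: "a \<in> {1..n}"
    and X: "((sms_perm S ^^ j) a, (sms_perm S ^^ Suc j) a, 0) \<in> S"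
    and Y: "((sms_perm S ^^ j') a, (sms_perm S ^^ Suc j') a, 0) \<in> S"
  shows "(sms_perm S ^^ j) a = (sms_perm S ^^ j') a"
proof -
  let ?\<sigma> = "sms_perm S"
  have d1: "1 \<le> d" using d by simp
  note memX = sms_memD[OF S X] and memY = sms_memD[OF S Y]
  obtain s where period: "(?\<sigma> ^^ s) a = a" "0 < s" using sms_perm_periodic[OF S d1 a] by blast
  have top: "cyc_dist n ((?\<sigma> ^^ j') a) ((?\<sigma> ^^ j) a) \<le> cyc_dist n ((?\<sigma> ^^ j') a) ((?\<sigma> ^^ Suc j') a)"
    using sms_perm_orbit_within_arc[OF S d1 memY(1), of "s * j' - j' + j"]
    unfolding periodic_funpow_reach[OF period] by simp
  have socle: "cyc_dist n ((?\<sigma> ^^ j) a) ((?\<sigma> ^^ Suc j') a) \<le> cyc_dist n ((?\<sigma> ^^ j) a) ((?\<sigma> ^^ Suc j) a)"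
    using sms_perm_orbit_within_arc[OF S d1 memX(1), of "s * j - j + Suc j'"]
    unfolding periodic_funpow_reach[OF period] by simp
  have "2 * n \<le> d * n" using d by simp
  then have "cyc_dist n ((?\<sigma> ^^ j') a) ((?\<sigma> ^^ j) a) + cyc_dist n ((?\<sigma> ^^ j) a) ((?\<sigma> ^^ Suc j) a) < d * n"
    using cyc_dist_lt[OF memY(1) memX(1)] cyc_dist_lt[OF memX(1,2)] by linarith
  then show ?thesis using sms_eq_if_overlap[OF S X Y top socle] by (simp del: funpow.simps)
qed

theorem lemma4p6:
  fixes K :: "'k::alg_closed_field itself"
    and n d i :: nat and S :: "(nat \<times> nat \<times> nat) set"
  assumes "1 \<le> n" and "2 \<le> d"
    and "is_sms K n d S"
    and "i \<in> {1..n}"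
  shows "\<forall>j1 j2. j1 < orbit_size (sms_perm S) i \<and> j2 < orbit_size (sms_perm S) i \<and>
           ((sms_perm S ^^ j1) i, (sms_perm S ^^ Suc j1) i, 0) \<in> S \<and>
           ((sms_perm S ^^ j2) i, (sms_perm S ^^ Suc j2) i, 0) \<in> S
           \<longrightarrow> j1 = j2"
proof (intro allI impI)
  fix j1 j2
  assume j: "j1 < orbit_size (sms_perm S) i \<and> j2 < orbit_size (sms_perm S) i \<and>
           ((sms_perm S ^^ j1) i, (sms_perm S ^^ Suc j1) i, 0) \<in> S \<and>
           ((sms_perm S ^^ j2) i, (sms_perm S ^^ Suc j2) i, 0) \<in> S"
  have "1 \<le> d" using assms(2) by simp
  then obtain s where "(sms_perm S ^^ s) i = i" "0 < s" using sms_perm_periodic assms(3,4) by blast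
  then have "inj_on (\<lambda>j. (sms_perm S ^^ j) i) {..<orbit_size (sms_perm S) i}"
    by (rule inj_on_funpow_orbit_size)
  moreover have "(sms_perm S ^^ j1) i = (sms_perm S ^^ j2) i"
    using sms_l0_objects_in_orbit_eq[OF assms(3,2,4)] j by blast
  ultimately show "j1 = j2" using j by (auto dest: inj_onD)
qed

end
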